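(* Consider the stochastic rolling-window dispatch problem $P_t$ for window $\mathscr{H}_t=\{t,\dots,t+W-1\}$ described in the context, and let $(\phi^*,\underline{\delta}^*,\bar{\delta}^*,\dots)$ be an optimal dual solution (satisfying the KKT conditions together with an optimal primal solution). Then for every ESR $i$, \[\phi^*_{it}=\Delta \delta_{it}^*+\sum_{t'=t+1}^{t+W-1}\sum_{k=1}^K\Delta \delta_{it'k}^*,\] where $\Delta \delta_{it}^*:=\underline{\delta}_{it}^*-\bar{\delta}_{it}^*$ and $\Delta \delta_{it'k}^*:=\underline{\delta}_{it'k}^*-\bar{\delta}_{it'k}^*$.
   Context: Single-bus market with $N$ energy storage resources (ESRs) indexed by $i$. ESR $i$ has charging/discharging efficiencies $\xi_i^{C},\xi_i^{D}\in(0,1]$, state-of-charge (SOC) limits $\underline{E}_i\le\bar{E}_i$, charging/discharging power limits $(\underline{g}_i^{C},\bar{g}_i^{C})$, $(\underline{g}_i^{D},\bar{g}_i^{D})$, ramp limits $\underline{r}_i^{C},\bar{r}_i^{C},\underline{r}_i^{D},\bar{r}_i^{D}$, and bid-in charging benefit and discharging cost functions $f^{C}_{it},f^{D}_{it}$. At interval $t$ the operator solves, over the window $\mathscr{H}_t=\{t,\dots,t+W-1\}$, given realized inelastic demand $d_t$, $K$ demand forecast scenarios $\hat d_{t'k}$ ($t'\in\mathscr{H}_t\setminus\{t\}$) with probabilities $\epsilon_k$, and the previously realized values $g^{C*}_{i(t-1)},g^{D*}_{i(t-1)},E^*_{i(t-1)}$, the problem $P_t$: minimize $\sum_i\big(f^{D}_{it}(g^{D}_{it})-f^{C}_{it}(g^{C}_{it})\big)+\sum_k\epsilon_k\sum_{t'\in\mathscr{H}_t\setminus\{t\}}\sum_i\big(f^{D}_{it'}(g^{D}_{it'k})-f^{C}_{it'}(g^{C}_{it'k})\big)$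 subject to, for all $i$, $k$, $t'\in\mathscr{H}_t\setminus\{t\}$ (with the convention that in scenario $k$ the interval-$t$ variables are the binding variables $g_{it},E_{it}$): power balance $\sum_i(g^{D}_{it}-g^{C}_{it})=d_t$ (multiplier $\lambda_t$) and $\sum_i(g^{D}_{it'k}-g^{C}_{it'k})=\hat d_{t'k}$; SOC transition $E_{it}-E^*_{i(t-1)}=\xi_i^{C}g^{C}_{it}-g^{D}_{it}/\xi_i^{D}$ (multiplier $\phi_{it}$) and $E_{it'k}-E_{i(t'-1)k}=\xi_i^{C}g^{C}_{it'k}-g^{D}_{it'k}/\xi_i^{D}$ (multiplier $\phi_{it'k}$); SOC limits $\underline{E}_i\le E_{it}\le\bar E_i$ (multipliers $\underline{\delta}_{it},\bar\delta_{it}$) and $\underline{E}_i\le E_{it'k}\le\bar E_i$ (multipliers $\underline{\delta}_{it'k},\bar\delta_{it'k}$); ramping $-\underline{r}_i^{C}\le g^{C}_{it}-g^{C*}_{i(t-1)}\le\bar r_i^{C}$ (multipliers $\underline{\mu}^{C}_{it},\bar\mu^{C}_{it}$), $-\underline{r}_i^{C}\le g^{C}_{it'k}-g^{C}_{i(t'-1)k}\le\bar r_i^{C}$ (multipliers $\underline{\mu}^{C}_{it'k},\bar\mu^{C}_{it'k}$), and the same with $D$ in place of $C$; power limits $\underline g_i^{C}\le g^{C}\le\bar g_i^{C}$, $\underline g_i^{D}\le g^{D}\le\bar g_i^{D}$ for all binding and scenario variables (multipliers $\underline\rho,\bar\rho$). Multipliers of inequality constraints are nonnegative and enter the Lagrangian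 as $\bar\mu(x-\text{upper})+\underline\mu(\text{lower}-x)$; an equality constraint written as $\text{LHS}=\text{RHS}$ enters as (multiplier)$\times$(LHS$-$RHS), except power balance, which enters as $\lambda_t\big(d_t-\sum_i(g^D_{it}-g^C_{it})\big)$ (and analogously for scenarios). *)

theory Defs
  imports Complex_Main
begin

text \<open>Stochastic rolling-window dispatch problem P_t on a single bus.
  ESRs are indexed by i < N, scenarios by k < K (the paper's k = 1..K),
  look-ahead intervals by absolute time t' in {t+1 .. t+W-1}.\<close>

record rw_problem =
  nN :: nat
  nK :: nat
  nW :: nat
  tcur :: nat
  xiC :: "nat \<Rightarrow> real"
  xiD :: "nat \<Rightarrow> real"
  Elo :: "nat \<Rightarrow> real"
  Ehi :: "nat \<Rightarrow> real"
  gClo :: "nat \<Rightarrow> real"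
  gChi :: "nat \<Rightarrow> real"
  gDlo :: "nat \<Rightarrow> real"
  gDhi :: "nat \<Rightarrow> real"
  rClo :: "nat \<Rightarrow> real"
  rChi :: "nat \<Rightarrow> real"
  rDlo :: "nat \<Rightarrow> real"
  rDhi :: "nat \<Rightarrow> real"
  fC :: "nat \<Rightarrow> nat \<Rightarrow> real \<Rightarrow> real"
  fD :: "nat \<Rightarrow> nat \<Rightarrow> real \<Rightarrow> real"
  dem :: real
  dhat :: "nat \<Rightarrow> nat \<Rightarrow> real"
  eps :: "nat \<Rightarrow> real"
  gCprev :: "nat \<Rightarrow> real"
  gDprev :: "nat \<Rightarrow> real"
  Eprev :: "nat \<Rightarrow> real"

text \<open>Primal variables: binding ones (index i) and scenario ones (indices i t' k).\<close>
datatype pvar = GCb nat | GDb nat | Eb nat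
  | GCs nat nat nat | GDs nat nat nat | Es nat nat nat

type_synonym primal = "pvar \<Rightarrow> real"

definition lookahead :: "rw_problem \<Rightarrow> nat set" where
  "lookahead P = {Suc (tcur P) ..< tcur P + nW P}"

definition pGC :: "rw_problem \<Rightarrow> primal \<Rightarrow> nat \<Rightarrow> nat \<Rightarrow> nat \<Rightarrow> real" where
  "pGC P x i t' k = (if t' = Suc (tcur P) then x (GCb i) else x (GCs i (t' - 1) k))"
definition pGD :: "rw_problem \<Rightarrow> primal \<Rightarrow> nat \<Rightarrow> nat \<Rightarrow> nat \<Rightarrow> real" where
  "pGD P x i t' k = (if t' = Suc (tcur P) then x (GDb i) else x (GDs i (t' - 1) k))"
definition pE :: "rw_problem \<Rightarrow> primal \<Rightarrow> nat \<Rightarrow> nat \<Rightarrow> nat \<Rightarrow> real" where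
  "pE P x i t' k = (if t' = Suc (tcur P) then x (Eb i) else x (Es i (t' - 1) k))"

definition objective :: "rw_problem \<Rightarrow> primal \<Rightarrow> real" where
  "objective P x =
     (\<Sum>i<nN P. fD P i (tcur P) (x (GDb i)) - fC P i (tcur P) (x (GCb i)))
     + (\<Sum>k<nK P. eps P k * (\<Sum>t'\<in>lookahead P. \<Sum>i<nN P.
          fD P i t' (x (GDs i t' k)) - fC P i t' (x (GCs i t' k))))"

definition feasible :: "rw_problem \<Rightarrow> primal \<Rightarrow> bool" where
  "feasible P x \<longleftrightarrow>
     (\<Sum>i<nN P. x (GDb i) - x (GCb i)) = dem P
   \<and> (\<forall>t'\<in>lookahead P. \<forall>k<nK P. (\<Sum>i<nN P. x (GDs i t' k) - x (GCs i t' k)) = dhat P t' k)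
   \<and> (\<forall>i<nN P.
        x (Eb i) - Eprev P i = xiC P i * x (GCb i) - x (GDb i) / xiD P i
      \<and> Elo P i \<le> x (Eb i) \<and> x (Eb i) \<le> Ehi P i
      \<and> - rClo P i \<le> x (GCb i) - gCprev P i \<and> x (GCb i) - gCprev P i \<le> rChi P i
      \<and> - rDlo P i \<le> x (GDb i) - gDprev P i \<and> x (GDb i) - gDprev P i \<le> rDhi P i
      \<and> gClo P i \<le> x (GCb i) \<and> x (GCb i) \<le> gChi P i
      \<and> gDlo P i \<le> x (GDb i) \<and> x (GDb i) \<le> gDhi P i
      \<and> (\<forall>t'\<in>lookahead P. \<forall>k<nK P.
          x (Es i t' k) - pE P x i t' k = xiC P i * x (GCs i t' k) - x (GDs i t' k) / xiD P i
        \<and> Elo P i \<le> x (Es i t' k) \<and> x (Es i t' k) \<le> Ehi P i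
        \<and> - rClo P i \<le> x (GCs i t' k) - pGC P x i t' k \<and> x (GCs i t' k) - pGC P x i t' k \<le> rChi P i
        \<and> - rDlo P i \<le> x (GDs i t' k) - pGD P x i t' k \<and> x (GDs i t' k) - pGD P x i t' k \<le> rDhi P i
        \<and> gClo P i \<le> x (GCs i t' k) \<and> x (GCs i t' k) \<le> gChi P i
        \<and> gDlo P i \<le> x (GDs i t' k) \<and> x (GDs i t' k) \<le> gDhi P i))"

definition optimal :: "rw_problem \<Rightarrow> primal \<Rightarrow> bool" where
  "optimal P x \<longleftrightarrow> feasible P x \<and> (\<forall>y. feasible P y \<longrightarrow> objective P x \<le> objective P y)"

text \<open>Dual variables (multipliers). Suffix S = scenario version (indices i t' k, or t' k).\<close>
record rw_dual =
  lam :: real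
  lamS :: "nat \<Rightarrow> nat \<Rightarrow> real"
  phi :: "nat \<Rightarrow> real"
  phiS :: "nat \<Rightarrow> nat \<Rightarrow> nat \<Rightarrow> real"
  dlo :: "nat \<Rightarrow> real"
  dhi :: "nat \<Rightarrow> real"
  dloS :: "nat \<Rightarrow> nat \<Rightarrow> nat \<Rightarrow> real"
  dhiS :: "nat \<Rightarrow> nat \<Rightarrow> nat \<Rightarrow> real"
  muClo :: "nat \<Rightarrow> real"
  muChi :: "nat \<Rightarrow> real"
  muDlo :: "nat \<Rightarrow> real"
  muDhi :: "nat \<Rightarrow> real"
  muCloS :: "nat \<Rightarrow> nat \<Rightarrow> nat \<Rightarrow> real"
  muChiS :: "nat \<Rightarrow> nat \<Rightarrow> nat \<Rightarrow> real"
  muDloS :: "nat \<Rightarrow> nat \<Rightarrow> nat \<Rightarrow> real"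
  muDhiS :: "nat \<Rightarrow> nat \<Rightarrow> nat \<Rightarrow> real"
  rhoClo :: "nat \<Rightarrow> real"
  rhoChi :: "nat \<Rightarrow> real"
  rhoDlo :: "nat \<Rightarrow> real"
  rhoDhi :: "nat \<Rightarrow> real"
  rhoCloS :: "nat \<Rightarrow> nat \<Rightarrow> nat \<Rightarrow> real"
  rhoChiS :: "nat \<Rightarrow> nat \<Rightarrow> nat \<Rightarrow> real"
  rhoDloS :: "nat \<Rightarrow> nat \<Rightarrow> nat \<Rightarrow> real"
  rhoDhiS :: "nat \<Rightarrow> nat \<Rightarrow> nat \<Rightarrow> real"

definition lagrangian :: "rw_problem \<Rightarrow> primal \<Rightarrow> rw_dual \<Rightarrow> real" where
  "lagrangian P x u =
     objective P x
   + lam u * (dem P - (\<Sum>i<nN P. x (GDb i) - x (GCb i)))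
   + (\<Sum>k<nK P. \<Sum>t'\<in>lookahead P.
        lamS u t' k * (dhat P t' k - (\<Sum>i<nN P. x (GDs i t' k) - x (GCs i t' k))))
   + (\<Sum>i<nN P.
        phi u i * (x (Eb i) - Eprev P i - (xiC P i * x (GCb i) - x (GDb i) / xiD P i))
      + dhi u i * (x (Eb i) - Ehi P i) + dlo u i * (Elo P i - x (Eb i))
      + muChi u i * (x (GCb i) - gCprev P i - rChi P i)
      + muClo u i * (- rClo P i - (x (GCb i) - gCprev P i))
      + muDhi u i * (x (GDb i) - gDprev P i - rDhi P i)
      + muDlo u i * (- rDlo P i - (x (GDb i) - gDprev P i))
      + rhoChi u i * (x (GCb i) - gChi P i) + rhoClo u i * (gClo P i - x (GCb i))
      + rhoDhi u i * (x (GDb i) - gDhi P i) + rhoDlo u i * (gDlo P i - x (GDb i))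
      + (\<Sum>k<nK P. \<Sum>t'\<in>lookahead P.
          phiS u i t' k * (x (Es i t' k) - pE P x i t' k
                            - (xiC P i * x (GCs i t' k) - x (GDs i t' k) / xiD P i))
        + dhiS u i t' k * (x (Es i t' k) - Ehi P i) + dloS u i t' k * (Elo P i - x (Es i t' k))
        + muChiS u i t' k * (x (GCs i t' k) - pGC P x i t' k - rChi P i)
        + muCloS u i t' k * (- rClo P i - (x (GCs i t' k) - pGC P x i t' k))
        + muDhiS u i t' k * (x (GDs i t' k) - pGD P x i t' k - rDhi P i)
        + muDloS u i t' k * (- rDlo P i - (x (GDs i t' k) - pGD P x i t' k))
        + rhoChiS u i t' k * (x (GCs i t' k) - gChi P i) + rhoCloS u i t' k * (gClo P i - x (GCs i t' k))
        + rhoDhiS u i t' k * (x (GDs i t' k) - gDhi P i) + rhoDloS u i t' k * (gDlo P i - x (GDs i t' k))))"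

definition dual_feasible :: "rw_problem \<Rightarrow> rw_dual \<Rightarrow> bool" where
  "dual_feasible P u \<longleftrightarrow> (\<forall>i<nN P.
      dlo u i \<ge> 0 \<and> dhi u i \<ge> 0 \<and> muClo u i \<ge> 0 \<and> muChi u i \<ge> 0
    \<and> muDlo u i \<ge> 0 \<and> muDhi u i \<ge> 0
    \<and> rhoClo u i \<ge> 0 \<and> rhoChi u i \<ge> 0 \<and> rhoDlo u i \<ge> 0 \<and> rhoDhi u i \<ge> 0
    \<and> (\<forall>t'\<in>lookahead P. \<forall>k<nK P.
        dloS u i t' k \<ge> 0 \<and> dhiS u i t' k \<ge> 0 \<and> muCloS u i t' k \<ge> 0 \<and> muChiS u i t' k \<ge> 0
      \<and> muDloS u i t' k \<ge> 0 \<and> muDhiS u i t' k \<ge> 0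
      \<and> rhoCloS u i t' k \<ge> 0 \<and> rhoChiS u i t' k \<ge> 0 \<and> rhoDloS u i t' k \<ge> 0 \<and> rhoDhiS u i t' k \<ge> 0))"

definition compl_slack :: "rw_problem \<Rightarrow> primal \<Rightarrow> rw_dual \<Rightarrow> bool" where
  "compl_slack P x u \<longleftrightarrow> (\<forall>i<nN P.
      dhi u i * (x (Eb i) - Ehi P i) = 0 \<and> dlo u i * (Elo P i - x (Eb i)) = 0
    \<and> muChi u i * (x (GCb i) - gCprev P i - rChi P i) = 0
    \<and> muClo u i * (- rClo P i - (x (GCb i) - gCprev P i)) = 0
    \<and> muDhi u i * (x (GDb i) - gDprev P i - rDhi P i) = 0
    \<and> muDlo u i * (- rDlo P i - (x (GDb i) - gDprev P i)) = 0
    \<and> rhoChi u i * (x (GCb i) - gChi P i) = 0 \<and> rhoClo u i * (gClo P i - x (GCb i)) = 0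
    \<and> rhoDhi u i * (x (GDb i) - gDhi P i) = 0 \<and> rhoDlo u i * (gDlo P i - x (GDb i)) = 0
    \<and> (\<forall>t'\<in>lookahead P. \<forall>k<nK P.
        dhiS u i t' k * (x (Es i t' k) - Ehi P i) = 0 \<and> dloS u i t' k * (Elo P i - x (Es i t' k)) = 0
      \<and> muChiS u i t' k * (x (GCs i t' k) - pGC P x i t' k - rChi P i) = 0
      \<and> muCloS u i t' k * (- rClo P i - (x (GCs i t' k) - pGC P x i t' k)) = 0
      \<and> muDhiS u i t' k * (x (GDs i t' k) - pGD P x i t' k - rDhi P i) = 0
      \<and> muDloS u i t' k * (- rDlo P i - (x (GDs i t' k) - pGD P x i t' k)) = 0
      \<and> rhoChiS u i t' k * (x (GCs i t' k) - gChi P i) = 0 \<and> rhoCloS u i t' k * (gClo P i - x (GCs i t' k)) = 0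
      \<and> rhoDhiS u i t' k * (x (GDs i t' k) - gDhi P i) = 0 \<and> rhoDloS u i t' k * (gDlo P i - x (GDs i t' k)) = 0))"

definition stationary :: "rw_problem \<Rightarrow> primal \<Rightarrow> rw_dual \<Rightarrow> bool" where
  "stationary P x u \<longleftrightarrow>
     (\<forall>v. ((\<lambda>s. lagrangian P (x(v := s)) u) has_real_derivative 0) (at (x v)))"

definition KKT :: "rw_problem \<Rightarrow> primal \<Rightarrow> rw_dual \<Rightarrow> bool" where
  "KKT P x u \<longleftrightarrow> feasible P x \<and> dual_feasible P u \<and> compl_slack P x u \<and> stationary P x u"

end

(* The SOC variables do not occur in the objective and enter the Lagrangian linearly. Stationarity
   in E_{it'k} therefore reads phi_{it'k} = Delta delta_{it'k} + phi_{i(t'+1)k}, the last term being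
   absent at the end of the window, and stationarity in E_{it} reads
   phi_{it} = Delta delta_{it} + sum_k phi_{i(t+1)k}. Unrolling the scenario recursion backwards
   from the end of the window and substituting gives the claim. *)

theory Submission
  imports Defs
begin

lemma DERIV_if_const:
  "DERIV f a :> A \<Longrightarrow> DERIV g a :> B \<Longrightarrow> DERIV (\<lambda>s. if c then f s else g s) a :> (if c then A else B)"
  by (cases c) auto

lemma sum_delta_triple:
  assumes "finite A" "finite B" "finite C"
  shows "(\<Sum>a\<in>A. \<Sum>b\<in>B. \<Sum>c\<in>C. if a = a0 \<and> c = c0 \<and> b = b0 then f a b c else 0)
       = (if a0 \<in> A \<and> b0 \<in> B \<and> c0 \<in> C then f a0 b0 c0 else (0::'a::comm_monoid_add))"
proof -
  have "(\<Sum>c\<in>C. if a = a0 \<and> c = c0 \<and> b = b0 then f a b c else 0)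
      = (if a = a0 \<and> b = b0 \<and> c0 \<in> C then f a b c0 else 0)" for a b
    using assms(3) by (cases "a = a0 \<and> b = b0") auto
  moreover have "(\<Sum>b\<in>B. if a = a0 \<and> b = b0 \<and> c0 \<in> C then f a b c0 else 0)
      = (if a = a0 \<and> b0 \<in> B \<and> c0 \<in> C then f a b0 c0 else 0)" for a
    using assms(2) by (cases "a = a0 \<and> c0 \<in> C") auto
  ultimately show ?thesis
    using assms(1) by (cases "b0 \<in> B \<and> c0 \<in> C") auto
qed

lemma sum_delta_outer_inner:
  assumes "finite A" "finite C"
  shows "(\<Sum>a\<in>A. \<Sum>b\<in>B. \<Sum>c\<in>C. if a = a0 \<and> c = c0 then f b else 0)
       = (if a0 \<in> A \<and> c0 \<in> C then (\<Sum>b\<in>B. f b) else (0::'a::comm_monoid_add))"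
proof -
  have "(\<Sum>c\<in>C. if a = a0 \<and> c = c0 then f b else 0) = (if a = a0 \<and> c0 \<in> C then f b else 0)"
    for a b
    using assms(2) by (cases "a = a0") auto
  moreover have "(\<Sum>b\<in>B. if a = a0 \<and> c0 \<in> C then f b else 0)
      = (if a = a0 \<and> c0 \<in> C then (\<Sum>b\<in>B. f b) else 0)" for a
    by auto
  ultimately show ?thesis
    using assms(1) by (cases "c0 \<in> C") auto
qed

lemma finite_lookahead [simp]: "finite (lookahead P)"
  by (simp add: lookahead_def)

lemma objective_upd_E [simp]:
  "objective P (x(Eb i := s)) = objective P x"
  "objective P (x(Es i t k := s)) = objective P x"
  by (simp_all add: objective_def)

lemma pGC_pGD_upd_E [simp]:
  "pGC P (x(Eb i := s)) = pGC P x" "pGC P (x(Es i t k := s)) = pGC P x"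
  "pGD P (x(Eb i := s)) = pGD P x" "pGD P (x(Es i t k := s)) = pGD P x"
  by (auto simp: pGC_def pGD_def fun_eq_iff)

lemma pE_upd_Eb:
  "pE P (x(Eb i := s)) j t' k' = (if j = i \<and> t' = Suc (tcur P) then s else pE P x j t' k')"
  by (simp add: pE_def)

lemma pE_upd_Es:
  assumes "t \<in> lookahead P" "t' \<in> lookahead P"
  shows "pE P (x(Es i t k := s)) j t' k' = (if j = i \<and> t' = Suc t \<and> k' = k then s else pE P x j t' k')"
  using assms by (auto simp: pE_def lookahead_def)

lemma lagrangian_has_derivative_Eb:
  assumes i: "i < nN P"
  shows "DERIV (\<lambda>s. lagrangian P (x(Eb i := s)) u) a :>
     phi u i + dhi u i - dlo u i
     - (if Suc (tcur P) \<in> lookahead P then (\<Sum>k<nK P. phiS u i (Suc (tcur P)) k) else 0)"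
  unfolding lagrangian_def
  apply (simp only: objective_upd_E pGC_pGD_upd_E pE_upd_Eb fun_upd_apply divide_inverse)
  apply (rule DERIV_if_const derivative_eq_intros refl)+
  apply (simp add: i if_distrib[where f="\<lambda>z. z * _"] sum.distrib sum_subtractf sum_negf cong: if_cong)
  apply (simp add: i sum_delta_outer_inner)
  done

lemma lagrangian_has_derivative_Es:
  assumes i: "i < nN P" and t: "t \<in> lookahead P" and k: "k < nK P"
  shows "DERIV (\<lambda>s. lagrangian P (x(Es i t k := s)) u) a :>
     phiS u i t k + dhiS u i t k - dloS u i t k
     - (if Suc t \<in> lookahead P then phiS u i (Suc t) k else 0)"
  unfolding lagrangian_def
  apply (simp only: objective_upd_E pGC_pGD_upd_E pE_upd_Es[OF t] fun_upd_apply divide_inverse cong: sum.cong)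
  apply (rule DERIV_if_const derivative_eq_intros refl)+
  apply (simp add: i if_distrib[where f="\<lambda>z. z * _"] sum.distrib sum_subtractf sum_negf cong: if_cong)
  apply (simp add: i k t left_diff_distrib if_distrib[where f="\<lambda>z. z * _"] sum_subtractf sum_delta_triple cong: if_cong)
  done

lemma stationary_Eb:
  assumes "stationary P x u" "i < nN P"
  shows "phi u i = dlo u i - dhi u i
    + (if Suc (tcur P) \<in> lookahead P then (\<Sum>k<nK P. phiS u i (Suc (tcur P)) k) else 0)"
proof -
  have "DERIV (\<lambda>s. lagrangian P (x(Eb i := s)) u) (x (Eb i)) :> 0"
    using assms(1) unfolding stationary_def by blast
  from DERIV_unique[OF lagrangian_has_derivative_Eb[OF assms(2)] this] show ?thesis
    by linarith
qed

lemma stationary_Es: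
  assumes "stationary P x u" "i < nN P" "t \<in> lookahead P" "k < nK P"
  shows "phiS u i t k = dloS u i t k - dhiS u i t k
    + (if Suc t \<in> lookahead P then phiS u i (Suc t) k else 0)"
proof -
  have "DERIV (\<lambda>s. lagrangian P (x(Es i t k := s)) u) (x (Es i t k)) :> 0"
    using assms(1) unfolding stationary_def by blast
  from DERIV_unique[OF lagrangian_has_derivative_Es[OF assms(2-4)] this] show ?thesis
    by linarith
qed

lemma backward_recurrence_sum:
  fixes f g :: "nat \<Rightarrow> 'a::comm_monoid_add"
  assumes rec: "\<And>s. a \<le> s \<Longrightarrow> s < b \<Longrightarrow> g s = f s + (if Suc s < b then g (Suc s) else 0)"
  shows "a \<le> s \<Longrightarrow> s < b \<Longrightarrow> g s = (\<Sum>r = s..<b. f r)"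
proof (induction "b - s" arbitrary: s)
  case 0
  then show ?case by simp
next
  case (Suc m)
  show ?case
  proof (cases "Suc s < b")
    case True
    then have "g (Suc s) = (\<Sum>r = Suc s..<b. f r)"
      using Suc by simp
    then show ?thesis
      using rec[OF Suc.prems] True by (simp add: sum.atLeast_Suc_lessThan)
  next
    case False
    then have "b = Suc s"
      using Suc.prems by simp
    then show ?thesis
      using rec[OF Suc.prems] by simp
  qed
qed

lemma stationary_phiS_eq_sum:
  assumes "stationary P x u" "i < nN P" "t \<in> lookahead P" "k < nK P"
  shows "phiS u i t k = (\<Sum>r = t..<tcur P + nW P. dloS u i r k - dhiS u i r k)"
proof (rule backward_recurrence_sum[where a = "Suc (tcur P)"])
  fix s
  assume "Suc (tcur P) \<le> s" "s < tcur P + nW P"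
  then show "phiS u i s k = dloS u i s k - dhiS u i s k
      + (if Suc s < tcur P + nW P then phiS u i (Suc s) k else 0)"
    using stationary_Es[OF assms(1,2) _ assms(4), of s] by (simp add: lookahead_def)
qed (use assms(3) in \<open>simp_all add: lookahead_def\<close>)

theorem lemma1:
  fixes P :: rw_problem and x :: primal and u :: rw_dual
  assumes eff: "\<forall>i<nN P. 0 < xiC P i \<and> xiC P i \<le> 1 \<and> 0 < xiD P i \<and> xiD P i \<le> 1"
    and Elim: "\<forall>i<nN P. Elo P i \<le> Ehi P i"
    and W: "nW P \<ge> 1"
    and probs: "\<forall>k<nK P. eps P k \<ge> 0" "(\<Sum>k<nK P. eps P k) = 1"
    and opt: "optimal P x"
    and kkt: "KKT P x u"
    and i: "i < nN P"
  shows "phi u i = (dlo u i - dhi u i)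
           + (\<Sum>t'\<in>lookahead P. \<Sum>k<nK P. dloS u i t' k - dhiS u i t' k)"
proof -
  have st: "stationary P x u"
    using kkt by (simp add: KKT_def)
  have la: "lookahead P = {Suc (tcur P)..<tcur P + nW P}"
    by (simp add: lookahead_def)
  show ?thesis
  proof (cases "Suc (tcur P) \<in> lookahead P")
    case True
    with la have "(\<Sum>k<nK P. phiS u i (Suc (tcur P)) k)
        = (\<Sum>k<nK P. \<Sum>t'\<in>lookahead P. dloS u i t' k - dhiS u i t' k)"
      by (simp add: stationary_phiS_eq_sum[OF st i])
    also have "\<dots> = (\<Sum>t'\<in>lookahead P. \<Sum>k<nK P. dloS u i t' k - dhiS u i t' k)"
      by (rule sum.swap)
    finally show ?thesis
      using stationary_Eb[OF st i] True by simp
  next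
    case False
    with la have "lookahead P = {}"
      by auto
    then show ?thesis
      using stationary_Eb[OF st i] by simp
  qed
qed

end
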